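(* Let $n\geq 2$, $i\geq 1$ and $2\leq m_1<\dots<m_i\leq n$. Then $A^{C_{m_1}\cdots C_{m_i}}_{[2,n],\emptyset}=A^{\mathrm{id}}_{I,J}$, where $J=\{m_1,\dots,m_i\}$ and $I=[2,n]\setminus J$.
   Context: Let $w_{ij}$, $1\leq i,j\leq n$, be formal variables subject only to $w_{ij}+w_{ji}=0$. Let $[2,n]=\{2,\dots,n\}$. For $\sigma\in S_n$ and a disjoint decomposition $I\sqcup J=[2,n]$, set $$A^\sigma_{I,J}:=\sum_{i\in I}\sum_{\ell=1}^{i-1}w_{\sigma(\ell)\sigma(i)}-\sum_{j\in J}\sum_{\ell=1}^{j-1}w_{\sigma(\ell)\sigma(j)}.$$ Permutations are composed right-to-left: $(\sigma\tau)(k)=\sigma(\tau(k))$. For $m\geq 2$, $C_m$ is the cycle $(1,m,m-1,\dots,2)$, i.e. $1\mapsto m\mapsto m-1\mapsto\dots\mapsto 2\mapsto 1$. *)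

theory Defs
  imports Main
begin

definition A_coef :: "(nat \<Rightarrow> nat \<Rightarrow> 'a::ab_group_add) \<Rightarrow> (nat \<Rightarrow> nat) \<Rightarrow> nat set \<Rightarrow> nat set \<Rightarrow> 'a" where
  "A_coef w \<sigma> I J =
     (\<Sum>i\<in>I. \<Sum>l\<in>{1..<i}. w (\<sigma> l) (\<sigma> i)) - (\<Sum>j\<in>J. \<Sum>l\<in>{1..<j}. w (\<sigma> l) (\<sigma> j))"

text \<open>The cycle C_m = (1, m, m-1, ..., 2): 1 to m, k to k-1 for 2 <= k <= m.\<close>
definition cyc :: "nat \<Rightarrow> nat \<Rightarrow> nat" where
  "cyc m k = (if k = 1 then m else if 2 \<le> k \<and> k \<le> m then k - 1 else k)"

definition cyc_prod :: "nat list \<Rightarrow> nat \<Rightarrow> nat" where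
  "cyc_prod ms = foldr (\<circ>) (map cyc ms) id"

end

theory Submission
  imports Defs "HOL-Combinatorics.Permutations"
begin

text \<open>Written as a word, \<open>\<sigma> = C\<^sub>m\<^sub>1 \<cdots> C\<^sub>m\<^sub>i\<close> is \<open>m\<^sub>i, \<dots>, m\<^sub>1\<close> followed by the
  remaining values in increasing order; so of two values \<open>a < b\<close> the larger one comes first
  exactly when \<open>b \<in> J\<close>. The left-hand side is the sum of \<open>w (\<sigma> l) (\<sigma> i)\<close> over positions
  \<open>l < i\<close>; reindexing it by the values \<open>a < b\<close> at these positions turns each term into
  \<open>w a b\<close> or, by antisymmetry, into \<open>- w a b\<close> exactly when \<open>b \<in> J\<close>, which is the right-hand side.\<close>

lemma sum_less_pairs_permutes:
  fixes S :: "'a::linorder set"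
  assumes "finite S" and "\<sigma> permutes S"
  shows "(\<Sum>(l, i)\<in>{(l, i). l \<in> S \<and> i \<in> S \<and> l < i}. F (min (\<sigma> l) (\<sigma> i)) (max (\<sigma> l) (\<sigma> i)))
       = (\<Sum>(a, b)\<in>{(a, b). a \<in> S \<and> b \<in> S \<and> a < b}. F a b)"
proof -
  let ?P = "{(a, b). a \<in> S \<and> b \<in> S \<and> a < b}"
  define h where "h = (\<lambda>(l, i). (min (\<sigma> l) (\<sigma> i), max (\<sigma> l) (\<sigma> i)))"
  have inj: "inj \<sigma>"
    using assms(2) by (rule permutes_inj)
  have "inj_on h ?P"
  proof (rule inj_onI, clarify)
    fix l i l' i'
    assume "l < i" "l' < i'" and "h (l, i) = h (l', i')"
    then have "{\<sigma> l, \<sigma> i} = {\<sigma> l', \<sigma> i'}"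
      by (auto simp: h_def min_def max_def split: if_splits)
    then have "{l, i} = {l', i'}"
      using inj by (auto simp: doubleton_eq_iff inj_eq)
    then show "l = l' \<and> i = i'"
      using \<open>l < i\<close> \<open>l' < i'\<close> by (auto simp: doubleton_eq_iff)
  qed
  moreover have "h ` ?P \<subseteq> ?P"
  proof (rule image_subsetI)
    fix p assume "p \<in> ?P"
    then obtain l i where p: "p = (l, i)" and "l \<in> S" "i \<in> S" "l < i"
      by auto
    then have "\<sigma> l \<in> S" "\<sigma> i \<in> S" "\<sigma> l \<noteq> \<sigma> i"
      using assms(2) inj by (auto simp: permutes_in_image inj_eq)
    then show "h p \<in> ?P"
      by (auto simp: p h_def min_def max_def)
  qed
  moreover have "finite ?P"
    using assms(1) by (auto intro: finite_subset[of _ "S \<times> S"])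
  ultimately have "bij_betw h ?P ?P"
    by (simp add: bij_betw_def endo_inj_surj)
  then show ?thesis
    using sum.reindex_bij_betw[of h ?P ?P "\<lambda>(a, b). F a b"] by (simp add: h_def case_prod_beta')
qed

lemma sum_upper_triangle:
  "(\<Sum>i\<in>{2..n}. \<Sum>l\<in>{1..<i}. f l i) = (\<Sum>(l, i)\<in>{(l, i). l \<in> {1..n} \<and> i \<in> {1..n} \<and> l < i}. f l i)"
  for n :: nat
proof -
  have "{(l, i). l \<in> {1..n} \<and> i \<in> {1..n} \<and> l < i} = prod.swap ` Sigma {2..n} (\<lambda>i. {1..<i})"
    by (auto simp: image_iff)
  then show ?thesis
    by (simp add: sum.Sigma sum.reindex case_prod_beta')
qed

lemma cyc_prod_Nil [simp]: "cyc_prod [] = id"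
  by (simp add: cyc_prod_def)

lemma cyc_prod_Cons [simp]: "cyc_prod (m # ms) = cyc m \<circ> cyc_prod ms"
  by (simp add: cyc_prod_def)

lemma inj_cyc: "0 < m \<Longrightarrow> inj (cyc m)"
  by (auto simp: inj_def cyc_def)

lemma cyc_pos: "0 < m \<Longrightarrow> 0 < k \<Longrightarrow> 0 < cyc m k"
  by (simp add: cyc_def)

lemma cyc_less_cyc_iff: "2 \<le> a \<Longrightarrow> 2 \<le> b \<Longrightarrow> cyc m a < cyc m b \<longleftrightarrow> a < b"
  by (auto simp: cyc_def)

lemma cyc_mem_insert_iff:
  assumes "2 \<le> b" and "\<forall>x\<in>J. m < x"
  shows "cyc m b \<in> insert m J \<longleftrightarrow> b \<in> J"
  using assms by (cases "b \<le> m") (auto simp: cyc_def)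

lemma cyc_permutes:
  assumes "1 \<le> m" and "m \<le> n"
  shows "cyc m permutes {1..n}"
proof (rule bij_imp_permutes)
  have "inj_on (cyc m) {1..n}"
    using inj_cyc[of m] assms by (auto intro: inj_on_subset[of _ UNIV])
  moreover have "cyc m ` {1..n} \<subseteq> {1..n}"
    using assms by (auto simp: cyc_def)
  ultimately show "bij_betw (cyc m) {1..n} {1..n}"
    by (simp add: bij_betw_def endo_inj_surj)
next
  show "cyc m k = k" if "k \<notin> {1..n}" for k
    using that assms by (auto simp: cyc_def)
qed

lemma cyc_prod_permutes:
  "\<forall>m\<in>set ms. 1 \<le> m \<and> m \<le> n \<Longrightarrow> cyc_prod ms permutes {1..n}"
proof (induction ms)
  case (Cons m ms)
  then have "cyc_prod ms permutes {1..n}" and "cyc m permutes {1..n}"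
    using cyc_permutes[of m n] by auto
  then show ?case
    unfolding cyc_prod_Cons by (rule permutes_compose)
qed (simp add: permutes_id)

lemma inj_cyc_prod: "\<forall>m\<in>set ms. 0 < m \<Longrightarrow> inj (cyc_prod ms)"
proof (induction ms)
  case (Cons m ms)
  have "inj (cyc m)"
    using Cons.prems by (simp add: inj_cyc)
  moreover have "inj (cyc_prod ms)"
    using Cons by simp
  ultimately show ?case
    unfolding cyc_prod_Cons by (rule inj_compose)
qed simp

lemma cyc_prod_pos: "\<forall>m\<in>set ms. 0 < m \<Longrightarrow> 0 < k \<Longrightarrow> 0 < cyc_prod ms k"
  by (induction ms) (auto intro: cyc_pos)

lemma cyc_prod_inversion_iff:
  assumes "sorted_wrt (<) ms" and "\<forall>m\<in>set ms. 2 \<le> m"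
    and "0 < p" and "0 < q" and "cyc_prod ms p < cyc_prod ms q"
  shows "q < p \<longleftrightarrow> cyc_prod ms q \<in> set ms"
  using assms
proof (induction ms arbitrary: p q)
  case Nil
  then show ?case by simp
next
  case (Cons m ms)
  define a b where "a = cyc_prod ms p" and "b = cyc_prod ms q"
  have m: "2 \<le> m" and above_m: "\<forall>x\<in>set ms. m < x"
    using Cons.prems(1,2) by auto
  have "0 < a" "0 < b"
    using Cons.prems(2-4) cyc_prod_pos[of ms] by (force simp: a_def b_def)+
  have less: "cyc m a < cyc m b"
    using Cons.prems(5) by (simp add: a_def b_def)
  have IH: "q < p \<longleftrightarrow> b \<in> set ms" if "a < b"
    using Cons.IH[of p q] Cons.prems that by (simp add: a_def b_def)
  consider "a = 1" | "b = 1" | "2 \<le> a" "2 \<le> b"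
    using \<open>0 < a\<close> \<open>0 < b\<close> by linarith
  then show ?case
  proof cases
    case 1
    then have "m < b" "2 \<le> b"
      using less by (auto simp: cyc_def split: if_splits)
    then show ?thesis
      using IH 1 cyc_mem_insert_iff[OF \<open>2 \<le> b\<close> above_m] by (simp add: b_def)
  next
    case 2
    then have "2 \<le> a" "a \<le> m"
      using less \<open>0 < a\<close> by (auto simp: cyc_def split: if_splits)
    then have "\<not> p < q"
      using Cons.IH[of q p] Cons.prems above_m 2 by (auto simp: a_def b_def)
    moreover have "p \<noteq> q"
      using 2 \<open>2 \<le> a\<close> by (auto simp: a_def b_def)
    ultimately show ?thesis
      using 2 by (simp add: b_def cyc_def)
  next
    case 3
    then show ?thesis
      using IH less cyc_less_cyc_iff cyc_mem_insert_iff[OF \<open>2 \<le> b\<close> above_m]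
      by (simp add: b_def)
  qed
qed

definition signed_weight :: "(nat \<Rightarrow> nat \<Rightarrow> 'a::ab_group_add) \<Rightarrow> nat set \<Rightarrow> nat \<Rightarrow> nat \<Rightarrow> 'a" where
  "signed_weight w J a b = (if b \<in> J then - w a b else w a b)"

lemma w_cyc_prod_eq_signed_weight:
  fixes w :: "nat \<Rightarrow> nat \<Rightarrow> 'a::ab_group_add"
  assumes antisym: "\<And>a b. w a b + w b a = 0"
    and sorted: "sorted_wrt (<) ms" and ge2: "\<forall>m\<in>set ms. 2 \<le> m"
    and "0 < l" and "l < i"
  shows "w (cyc_prod ms l) (cyc_prod ms i)
       = signed_weight w (set ms) (min (cyc_prod ms l) (cyc_prod ms i)) (max (cyc_prod ms l) (cyc_prod ms i))"
proof (cases "cyc_prod ms l < cyc_prod ms i")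
  case True
  then show ?thesis
    using cyc_prod_inversion_iff[OF sorted ge2, of l i] assms by (simp add: signed_weight_def)
next
  case False
  moreover have "cyc_prod ms l \<noteq> cyc_prod ms i"
    using inj_cyc_prod[of ms] ge2 \<open>l < i\<close> by (fastforce simp: inj_eq)
  ultimately have "cyc_prod ms i < cyc_prod ms l"
    by simp
  then show ?thesis
    using cyc_prod_inversion_iff[OF sorted ge2, of i l] assms antisym[of "cyc_prod ms l" "cyc_prod ms i"]
    by (simp add: signed_weight_def eq_neg_iff_add_eq_0)
qed

lemma A_coef_id_eq_signed_sum:
  fixes n :: nat
  assumes "J \<subseteq> {2..n}"
  shows "A_coef w id ({2..n} - J) J = (\<Sum>b\<in>{2..n}. \<Sum>a\<in>{1..<b}. signed_weight w J a b)"
proof -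
  have "(\<Sum>b\<in>{2..n}. \<Sum>a\<in>{1..<b}. signed_weight w J a b)
      = (\<Sum>b\<in>{2..n}. if b \<in> J then - (\<Sum>a\<in>{1..<b}. w a b) else (\<Sum>a\<in>{1..<b}. w a b))"
    by (intro sum.cong) (auto simp: signed_weight_def sum_negf)
  also have "\<dots> = - (\<Sum>b\<in>J. \<Sum>a\<in>{1..<b}. w a b) + (\<Sum>b\<in>{2..n} - J. \<Sum>a\<in>{1..<b}. w a b)"
    using assms by (simp add: sum.If_cases sum_negf Int_absorb1 Diff_eq)
  finally show ?thesis
    by (simp add: A_coef_def)
qed

theorem lemma3p8:
  fixes w :: "nat \<Rightarrow> nat \<Rightarrow> 'a::ab_group_add" and n :: nat and ms :: "nat list"
  assumes antisym: "\<And>i j. w i j + w j i = 0"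
    and n: "n \<ge> 2"
    and ne: "ms \<noteq> []"
    and sorted: "sorted_wrt (<) ms"
    and range: "\<forall>m\<in>set ms. 2 \<le> m \<and> m \<le> n"
  shows "A_coef w (cyc_prod ms) {2..n} {} = A_coef w id ({2..n} - set ms) (set ms)"
proof -
  let ?\<sigma> = "cyc_prod ms" and ?F = "signed_weight w (set ms)"
  let ?P = "{(l, i). l \<in> {1..n} \<and> i \<in> {1..n} \<and> l < i}"
  have "A_coef w ?\<sigma> {2..n} {} = (\<Sum>(l, i)\<in>?P. ?F (min (?\<sigma> l) (?\<sigma> i)) (max (?\<sigma> l) (?\<sigma> i)))"
    using w_cyc_prod_eq_signed_weight[of w, OF antisym sorted] range
    unfolding A_coef_def sum_upper_triangle by (auto intro!: sum.cong)
  also have "\<dots> = (\<Sum>(a, b)\<in>?P. ?F a b)"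
    using range by (intro sum_less_pairs_permutes cyc_prod_permutes) auto
  also have "\<dots> = (\<Sum>b\<in>{2..n}. \<Sum>a\<in>{1..<b}. ?F a b)"
    by (simp only: sum_upper_triangle)
  also have "\<dots> = A_coef w id ({2..n} - set ms) (set ms)"
    using range by (subst A_coef_id_eq_signed_sum) auto
  finally show ?thesis .
qed

end
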